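(* Let $d,K,L,M,N\in\mathbb N$ and let $w_{k,l,m},x_{k,l,n}\in\mathbb R^d$ for $k\in[K],l\in[L],m\in[M],n\in[N]$. Suppose that for all $k\in[K]$, $$\sum_{j=1}^k\Big(\sum_{(l,m,n)\in[L]\times[M]\times[N]}|w_{k,l,m}^Tx_{j,l,n}|\Big)^2\le\beta,\qquad\sum_{l=1}^L\sum_{m=1}^M\|w_{k,l,m}\|_1\le G_w,\qquad\sum_{l=1}^L\sum_{n=1}^N\|x_{k,l,n}\|_1\le G_x,$$ with $G_w,G_x>0$. Then for any $\lambda>0$, $$\sum_{k=1}^K\sum_{(l,m,n)\in[L]\times[M]\times[N]}|w_{k,l,m}^Tx_{k,l,n}|\le\sqrt{(\lambda+\beta)\,dLMK\log\Big(1+\frac{MG_w^2G_x^2K}{dL\lambda}\Big)}.$$ *)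

theory Defs
  imports "HOL-Analysis.Analysis"
begin

definition l1norm :: "real ^ 'd \<Rightarrow> real" where
  "l1norm x = (\<Sum>i\<in>UNIV. \<bar>x $ i\<bar>)"

end

theory Submission
  imports Defs
begin

text \<open>
  Put \<open>z\<^sub>k\<^sub>l\<^sub>m = \<Sum>\<^sub>n sgn (w\<^sub>k\<^sub>l\<^sub>m \<bullet> x\<^sub>k\<^sub>l\<^sub>n) x\<^sub>k\<^sub>l\<^sub>n\<close>, so that the left-hand side is \<open>\<Sum> w\<^sub>k\<^sub>l\<^sub>m \<bullet> z\<^sub>k\<^sub>l\<^sub>m\<close>.
  For each \<open>l\<close>, list the \<open>z\<^sub>k\<^sub>l\<^sub>m\<close> as one sequence of \<open>KM\<close> rounds (block \<open>k\<close>, position \<open>m\<close>) and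
  let \<open>V\<close> be the regularized Gram matrix \<open>c I + \<Sum> z z\<^sup>T\<close> of the rounds up to the current one,
  with \<open>c = \<lambda> / G\<^sub>w\<^sup>2\<close>. Cauchy--Schwarz in the norm of \<open>V\<close> bounds the sum by
  \<open>(\<Sum> w\<^sup>T V w)\<^sup>1\<^sup>/\<^sup>2 (\<Sum> z\<^sup>T V\<^sup>-\<^sup>1 z)\<^sup>1\<^sup>/\<^sup>2\<close>. Since \<open>V\<close> only involves blocks \<open>j \<le> k\<close>, the first sum
  is at most \<open>K (\<lambda> + M \<beta>)\<close> by the hypotheses on \<open>\<beta>\<close> and \<open>G\<^sub>w\<close>. The second is the elliptical
  potential, at most \<open>d log (det V / c\<^sup>d)\<close> by the matrix determinant lemma; Hadamard's inequality
  and concavity of \<open>log\<close> turn this into \<open>d L log (1 + K M G\<^sub>x\<^sup>2 / (d L c))\<close>.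
\<close>

section \<open>Positive definite matrices\<close>

definition positive_definite :: "real^'n^'n \<Rightarrow> bool" where
  "positive_definite A \<longleftrightarrow> (\<forall>x. x \<noteq> 0 \<longrightarrow> 0 < x \<bullet> (A *v x))"

lemma positive_definite_quadratic_nonneg: "positive_definite A \<Longrightarrow> 0 \<le> x \<bullet> (A *v x)"
  unfolding positive_definite_def by (cases "x = 0") (auto intro: less_imp_le)

lemma positive_definite_diagonal_pos:
  assumes "positive_definite A" shows "0 < A$i$i"
proof -
  have "0 < axis i 1 \<bullet> (A *v axis i (1::real))"
    using assms unfolding positive_definite_def by (simp add: axis_eq_0_iff)
  then show ?thesis
    by (simp add: matrix_vector_mult_def inner_vec_def axis_def if_distrib[where f="\<lambda>x. x * _"]
        if_distrib[where f="\<lambda>x. _ * x"] cong: if_cong)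
qed

lemma positive_definite_invertible:
  assumes "positive_definite A" shows "invertible A"
proof -
  have "A *v x = 0 \<Longrightarrow> x = 0" for x
    using assms unfolding positive_definite_def by (metis inner_zero_right less_irrefl)
  then show ?thesis
    using matrix_left_invertible_ker invertible_left_inverse by blast
qed

lemma matrix_inv_invertible:
  fixes A :: "real^'n^'n"
  assumes "invertible A"
  shows "A ** matrix_inv A = mat 1" and "matrix_inv A ** A = mat 1"
  using someI_ex[OF assms[unfolded invertible_def]] by (simp_all add: matrix_inv_def)

lemma matrix_inv_mult_vector_eq:
  fixes A :: "real^'n^'n"
  assumes "invertible A" "A *v y = z"
  shows "matrix_inv A *v z = y"
  using matrix_inv_invertible(2)[OF assms(1)] assms(2)
  by (metis matrix_vector_mul_assoc matrix_vector_mul_lid)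

lemma invertible_mult_matrix_inv_vector:
  fixes A :: "real^'n^'n"
  assumes "invertible A" shows "A *v (matrix_inv A *v z) = z"
  using matrix_inv_invertible(1)[OF assms] by (metis matrix_vector_mul_assoc matrix_vector_mul_lid)

lemma positive_definite_inverse_quadratic_nonneg:
  assumes "positive_definite A" shows "0 \<le> z \<bullet> (matrix_inv A *v z)"
proof -
  have "A *v (matrix_inv A *v z) = z"
    using invertible_mult_matrix_inv_vector[OF positive_definite_invertible[OF assms]] .
  then show ?thesis
    using positive_definite_quadratic_nonneg[OF assms, of "matrix_inv A *v z"] by (simp add: inner_commute)
qed

lemma positive_definite_congruence:
  fixes A E :: "real^'n^'n"
  assumes "positive_definite A" "invertible E"
  shows "positive_definite (E ** A ** transpose E)"
  unfolding positive_definite_def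
proof (intro allI impI)
  fix x :: "real^'n" assume "x \<noteq> 0"
  then have "transpose E *v x \<noteq> 0"
    using transpose_invertible[OF assms(2)] inj_matrix_vector_mult
    by (metis matrix_vector_mult_0_right injD)
  then have "0 < (transpose E *v x) \<bullet> (A *v (transpose E *v x))"
    using assms(1) unfolding positive_definite_def by blast
  moreover have "x \<bullet> (E *v v) = (transpose E *v x) \<bullet> v" for v
    by (metis dot_lmul_matrix transpose_matrix_vector)
  ultimately show "0 < x \<bullet> ((E ** A ** transpose E) *v x)"
    by (simp add: matrix_vector_mul_assoc[symmetric])
qed

lemma symmetric_matrix_nth_swap:
  fixes A :: "real^'n^'n"
  assumes "transpose A = A" shows "A$i$j = A$j$i"
  by (metis assms transpose_def vec_lambda_beta)

lemma symmetric_bilinear_commute: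
  fixes A :: "real^'n^'n"
  assumes "transpose A = A" shows "a \<bullet> (A *v b) = b \<bullet> (A *v a)"
  by (metis assms dot_lmul_matrix inner_commute vector_transpose_matrix)

text \<open>Cauchy--Schwarz for the inner product induced by \<open>A\<close>, applied to \<open>w\<close> and \<open>A\<^sup>-\<^sup>1 z\<close>.\<close>
lemma inner_square_le_quadratic_mult_inverse:
  fixes A :: "real^'n^'n"
  assumes sym: "transpose A = A" and pd: "positive_definite A"
  shows "(w \<bullet> z)\<^sup>2 \<le> (w \<bullet> (A *v w)) * (z \<bullet> (matrix_inv A *v z))"
proof -
  define y where "y = matrix_inv A *v z"
  have y: "A *v y = z"
    using invertible_mult_matrix_inv_vector[OF positive_definite_invertible[OF pd]] by (simp add: y_def)
  define p q r where "p = w \<bullet> (A *v w)" and "q = y \<bullet> (A *v y)" and "r = w \<bullet> (A *v y)"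
  have "z \<bullet> y = q" "w \<bullet> z = r" using y by (simp_all add: q_def r_def inner_commute)
  moreover have "r\<^sup>2 \<le> p * q"
  proof (cases "y = 0")
    case True then show ?thesis
      by (simp add: r_def q_def p_def positive_definite_quadratic_nonneg[OF pd])
  next
    case False
    then have "0 < q" using pd unfolding positive_definite_def q_def by blast
    have "y \<bullet> (A *v w) = r" using symmetric_bilinear_commute[OF sym] r_def by metis
    then have "(q *\<^sub>R w - r *\<^sub>R y) \<bullet> (A *v (q *\<^sub>R w - r *\<^sub>R y)) = q * (p * q - r\<^sup>2)"
      by (simp add: p_def q_def r_def matrix_vector_mult_diff_distrib matrix_vector_mult_scaleR
          inner_diff_left inner_diff_right power2_eq_square algebra_simps)
    then have "0 \<le> q * (p * q - r\<^sup>2)" by (metis positive_definite_quadratic_nonneg[OF pd])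
    then show ?thesis using \<open>0 < q\<close> by (simp add: zero_le_mult_iff)
  qed
  ultimately show ?thesis by (simp add: p_def y_def)
qed

section \<open>The matrix determinant lemma\<close>

lemma row_eq_nth: "row i A = A $ i"
  by (simp add: row_def vec_eq_iff)

lemma det_add_row_multiples:
  fixes A :: "real^'n^'n"
  assumes "p \<notin> S"
  shows "det (\<chi> i. if i \<in> S then row i A + c i *s row p A else row i A) = det A"
proof -
  have "finite S" by simp
  then show ?thesis using assms
  proof (induction S rule: finite_induct)
    case empty
    then show ?case by (simp add: row_eq_nth)
  next
    case (insert q S)
    let ?M = "(\<chi> i. if i \<in> S then row i A + c i *s row p A else row i A) :: real^'n^'n"
    have "q \<noteq> p" using insert by auto
    have eq: "(\<chi> i. if i \<in> insert q S then row i A + c i *s row p A else row i A)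
       = (\<chi> k. if k = q then row q ?M + c q *s row p ?M else row k ?M)"
      using insert \<open>q \<noteq> p\<close> by (auto simp: row_eq_nth vec_eq_iff)
    show ?case unfolding eq det_row_operation[OF \<open>q \<noteq> p\<close>] using insert by simp
  qed
qed

definition outer_prod :: "real^'n \<Rightarrow> real^'n^'n" where
  "outer_prod a = (\<chi> i j. a$i * a$j)"

lemma outer_prod_mult_vector: "outer_prod a *v x = (a \<bullet> x) *\<^sub>R a"
  by (simp add: vec_eq_iff outer_prod_def matrix_vector_mult_def inner_vec_def sum_distrib_left mult_ac)

text \<open>Adding \<open>u\<^sub>i u\<close> to the rows \<open>i \<in> S\<close> one at a time; since \<open>u\<close> is the combination
  \<open>\<Sum>\<^sub>p y\<^sub>p row\<^sub>p A\<close> of the rows, replacing row \<open>p\<close> by \<open>u\<close> multiplies the determinant by \<open>y\<^sub>p\<close>.\<close>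
lemma det_add_outer_prod_rows:
  fixes A :: "real^'n^'n"
  assumes y: "transpose A *v y = u"
  shows "det (\<chi> i. if i \<in> S then row i A + u$i *s u else row i A)
         = det A + (\<Sum>p\<in>S. u$p * y$p) * det A"
proof -
  have "u = (\<Sum>i\<in>UNIV. y$i *s row i A)"
    using y by (simp add: vec_eq_iff matrix_vector_mult_def transpose_def row_def sum_component mult.commute)
  then have replace: "det (\<chi> i. if i = p then u else row i A) = y$p * det A" for p
    using cramer_lemma_transpose[of p y A] by (simp only:)
  have "finite S" by simp
  then show ?thesis
  proof (induction S rule: finite_induct)
    case empty
    then show ?case by (simp add: row_eq_nth)
  next
    case (insert q S)
    define C where "C i = (if i \<in> S then row i A + u$i *s u else row i A)" for i
    let ?R = "(\<chi> i. if i = q then u else row i A) :: real^'n^'n"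
    have split: "(\<chi> i. if i \<in> insert q S then row i A + u$i *s u else row i A)
          = (\<chi> i. if i = q then row q A + u$q *s u else C i)"
      by (auto simp: C_def vec_eq_iff)
    have old: "(\<chi> i. if i = q then row q A else C i)
          = (\<chi> i. if i \<in> S then row i A + u$i *s u else row i A)"
      using insert by (auto simp: C_def vec_eq_iff)
    have "(\<chi> i. if i = q then u else C i)
          = (\<chi> i. if i \<in> S then row i ?R + u$i *s row q ?R else row i ?R)"
      using insert by (auto simp: C_def vec_eq_iff row_eq_nth)
    then have new: "det (\<chi> i. if i = q then u else C i) = y$q * det A"
      using det_add_row_multiples[of q S ?R "\<lambda>i. u$i"] insert replace by simp
    show ?case
      unfolding split det_row_add det_row_mul old insert.IH new using insert by (simp add: algebra_simps)
  qed
qed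

lemma det_add_outer_prod:
  fixes A :: "real^'n^'n"
  assumes "transpose A *v y = u"
  shows "det (A + outer_prod u) = det A * (1 + u \<bullet> y)"
proof -
  have "A + outer_prod u = (\<chi> i. if i \<in> UNIV then row i A + u$i *s u else row i A)"
    by (simp add: vec_eq_iff outer_prod_def row_def)
  then show ?thesis using det_add_outer_prod_rows[OF assms, of UNIV]
    by (simp add: inner_vec_def algebra_simps)
qed

section \<open>Hadamard's inequality\<close>

text \<open>Symmetric Gaussian elimination of row and column \<open>p\<close>: \<open>C = E A E\<^sup>T\<close>, where \<open>E\<close> subtracts
  \<open>A\<^sub>i\<^sub>p / A\<^sub>p\<^sub>p\<close> times row \<open>p\<close> from every other row \<open>i\<close>.\<close>
lemma symmetric_pivot_elimination:
  fixes A :: "real^'n^'n"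
  assumes sym: "transpose A = A" and pd: "positive_definite A"
  obtains C where "transpose C = C" "positive_definite C" "det C = det A" "C$p$p = A$p$p"
    "\<And>i. i \<noteq> p \<Longrightarrow> C$i$p = 0 \<and> C$p$i = 0"
    "\<And>i j. i \<noteq> p \<Longrightarrow> j \<noteq> p \<Longrightarrow> C$i$j = A$i$j - A$i$p * A$p$j / A$p$p"
proof
  define a where "a = A$p$p"
  have "a > 0" using positive_definite_diagonal_pos[OF pd] a_def by simp
  define e where "e i = - A$i$p / a" for i
  define E :: "real^'n^'n" where "E = (\<chi> i k. if k = i then 1 else if k = p then e i else 0)"
  define C where "C = E ** A ** transpose E"
  have E_sum: "(\<Sum>k\<in>UNIV. E$i$k * f k) = f i + (if i \<noteq> p then e i * f p else 0)" for i f
  proof -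
    have "(\<Sum>k\<in>UNIV. E$i$k * f k)
        = (\<Sum>k\<in>UNIV. (if k = i then f k else 0) + (if k = p \<and> i \<noteq> p then e i * f k else 0))"
      by (intro sum.cong) (auto simp: E_def)
    then show ?thesis by (simp add: sum.distrib)
  qed
  have EA: "(E ** A)$i$j = A$i$j + (if i \<noteq> p then e i * A$p$j else 0)" for i j
    by (simp add: matrix_matrix_mult_def E_sum)
  have C_entry: "C$i$j = (E ** A)$i$j + (if j \<noteq> p then e j * (E ** A)$i$p else 0)" for i j
  proof -
    have "C$i$j = (\<Sum>k\<in>UNIV. E$j$k * (E ** A)$i$k)"
      by (simp add: C_def matrix_matrix_mult_def transpose_def mult.commute)
    then show ?thesis by (simp add: E_sum)
  qed
  have "E = (\<chi> i. if i \<in> - {p} then row i (mat 1) + e i *s row p (mat 1) else row i (mat 1))"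
    by (auto simp: E_def vec_eq_iff row_def mat_def)
  then have "det E = 1"
    using det_add_row_multiples[of p "- {p}" "mat 1 :: real^'n^'n" e] by simp
  then have "invertible E" by (simp add: invertible_det_nz)
  show "transpose C = C"
    by (simp add: C_def matrix_transpose_mul sym matrix_mul_assoc)
  show "positive_definite C"
    unfolding C_def by (rule positive_definite_congruence[OF pd \<open>invertible E\<close>])
  show "det C = det A"
    by (simp add: C_def det_mul \<open>det E = 1\<close>)
  show "C$p$p = A$p$p"
    by (simp add: C_entry EA a_def)
  show "C$i$p = 0 \<and> C$p$i = 0" if "i \<noteq> p" for i
    using that \<open>a > 0\<close> by (simp add: C_entry EA e_def a_def symmetric_matrix_nth_swap[OF sym, of p i])
  show "C$i$j = A$i$j - A$i$p * A$p$j / A$p$p" if "i \<noteq> p" "j \<noteq> p" for i j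
    using that \<open>a > 0\<close> by (simp add: C_entry EA e_def a_def)
qed

text \<open>Eliminating a pivot \<open>p \<in> J\<close> removes \<open>p\<close> from the support of the off-diagonal entries
  and can only decrease the diagonal, which makes the induction on \<open>J\<close> work.\<close>
lemma hadamard_inequality_off_diagonal_support:
  fixes A :: "real^'n^'n" and J :: "'n set"
  assumes "transpose A = A" "positive_definite A"
    and "\<And>i j. i \<noteq> j \<Longrightarrow> i \<notin> J \<or> j \<notin> J \<Longrightarrow> A$i$j = 0"
  shows "det A \<le> (\<Prod>i\<in>UNIV. A$i$i)"
proof -
  have "finite J" by simp
  then show ?thesis using assms
  proof (induction J arbitrary: A rule: finite_induct)
    case empty
    then show ?case using det_diagonal[of A] by simp
  next
    case (insert p J)
    obtain C where symC: "transpose C = C" and pdC: "positive_definite C" and "det C = det A"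
      and Cpp: "C$p$p = A$p$p" and Cp: "\<And>i. i \<noteq> p \<Longrightarrow> C$i$p = 0 \<and> C$p$i = 0"
      and Cij: "\<And>i j. i \<noteq> p \<Longrightarrow> j \<noteq> p \<Longrightarrow> C$i$j = A$i$j - A$i$p * A$p$j / A$p$p"
      using symmetric_pivot_elimination[OF insert.prems(1,2)] by metis
    have "C$i$j = 0" if "i \<noteq> j" "i \<notin> J \<or> j \<notin> J" for i j
    proof (cases "i = p \<or> j = p")
      case True then show ?thesis using Cp that by auto
    next
      case False then show ?thesis using Cij insert.prems(3) that by auto
    qed
    then have "det C \<le> (\<Prod>i\<in>UNIV. C$i$i)" using insert.IH symC pdC by blast
    also have "\<dots> \<le> (\<Prod>i\<in>UNIV. A$i$i)"
    proof (rule prod_mono, intro conjI)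
      fix i
      show "0 \<le> C$i$i" using positive_definite_diagonal_pos[OF pdC] less_imp_le by blast
      have "0 \<le> A$i$p * A$p$i / A$p$p"
        using positive_definite_diagonal_pos[OF insert.prems(2), of p]
          symmetric_matrix_nth_swap[OF insert.prems(1), of p i] by simp
      then show "C$i$i \<le> A$i$i" using Cij Cpp by (cases "i = p") auto
    qed
    finally show ?case using \<open>det C = det A\<close> by simp
  qed
qed

lemma hadamard_inequality:
  fixes A :: "real^'n^'n"
  assumes "transpose A = A" "positive_definite A"
  shows "det A \<le> (\<Prod>i\<in>UNIV. A$i$i)"
  using hadamard_inequality_off_diagonal_support[OF assms, of UNIV] by simp

lemma sum_ln_le_card_mult_ln_mean:
  fixes y :: "'a \<Rightarrow> real"
  assumes "finite A" "A \<noteq> {}" "\<And>i. i \<in> A \<Longrightarrow> 0 < y i"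
  shows "(\<Sum>i\<in>A. ln (y i)) \<le> card A * ln ((\<Sum>i\<in>A. y i) / card A)"
proof -
  define \<mu> where "\<mu> = (\<Sum>i\<in>A. y i) / card A"
  have "card A > 0" using assms by (simp add: card_gt_0_iff)
  moreover have "(\<Sum>i\<in>A. y i) > 0" using assms by (simp add: sum_pos)
  ultimately have "\<mu> > 0" by (simp add: \<mu>_def)
  have "ln (y i) \<le> ln \<mu> + y i / \<mu> - 1" if "i \<in> A" for i
    using ln_le_minus_one[of "y i / \<mu>"] ln_div[of "y i" \<mu>] assms(3)[OF that] \<open>\<mu> > 0\<close> by simp
  then have "(\<Sum>i\<in>A. ln (y i)) \<le> (\<Sum>i\<in>A. ln \<mu> + y i / \<mu> - 1)"
    by (rule sum_mono)
  also have "\<dots> = card A * ln \<mu> + (\<Sum>i\<in>A. y i) / \<mu> - card A"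
    by (simp add: sum.distrib sum_subtractf sum_divide_distrib)
  also have "(\<Sum>i\<in>A. y i) / \<mu> = card A"
    using \<open>card A > 0\<close> \<open>(\<Sum>i\<in>A. y i) > 0\<close> by (simp add: \<mu>_def)
  finally show ?thesis by (simp add: \<mu>_def)
qed

lemma divide_one_plus_le_ln_one_plus:
  fixes r :: real
  assumes "0 \<le> r" shows "r / (1 + r) \<le> ln (1 + r)"
proof -
  have "ln (1 / (1 + r)) \<le> 1 / (1 + r) - 1" using assms by (intro ln_le_minus_one) simp
  moreover have "ln (1 / (1 + r)) = - ln (1 + r)" using assms by (simp add: ln_div)
  moreover have "1 / (1 + r) - 1 = - (r / (1 + r))" using assms by (simp add: field_simps)
  ultimately show ?thesis by linarith
qed

lemma sum_squares_le_square_sum: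
  fixes f :: "'a \<Rightarrow> real"
  assumes "\<And>i. i \<in> A \<Longrightarrow> 0 \<le> f i"
  shows "(\<Sum>i\<in>A. (f i)\<^sup>2) \<le> (\<Sum>i\<in>A. f i)\<^sup>2"
proof (cases "finite A")
  case True
  then show ?thesis using assms
  proof (induction A rule: finite_induct)
    case (insert a A)
    then have "0 \<le> f a" "0 \<le> (\<Sum>i\<in>A. f i)" by (simp_all add: sum_nonneg)
    then have "(f a)\<^sup>2 + (\<Sum>i\<in>A. f i)\<^sup>2 \<le> (f a + (\<Sum>i\<in>A. f i))\<^sup>2"
      by (simp add: power2_eq_square algebra_simps)
    with insert show ?case by simp
  qed simp
qed simp

lemma sum_sqrt_mult_le:
  assumes "\<And>i. i \<in> I \<Longrightarrow> 0 \<le> a i" "\<And>i. i \<in> I \<Longrightarrow> 0 \<le> b i"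
  shows "(\<Sum>i\<in>I. sqrt (a i) * sqrt (b i)) \<le> sqrt (\<Sum>i\<in>I. a i) * sqrt (\<Sum>i\<in>I. b i)"
proof -
  have "(\<Sum>i\<in>I. sqrt (a i) * sqrt (b i))\<^sup>2 \<le> (\<Sum>i\<in>I. (sqrt (a i))\<^sup>2) * (\<Sum>i\<in>I. (sqrt (b i))\<^sup>2)"
    by (rule Cauchy_Schwarz_ineq_sum)
  also have "\<dots> = (\<Sum>i\<in>I. a i) * (\<Sum>i\<in>I. b i)" using assms by simp
  finally have "sqrt ((\<Sum>i\<in>I. sqrt (a i) * sqrt (b i))\<^sup>2) \<le> sqrt ((\<Sum>i\<in>I. a i) * (\<Sum>i\<in>I. b i))"
    by (rule real_sqrt_le_mono)
  then show ?thesis by (simp add: real_sqrt_mult)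
qed

lemma sum_inner_le_sqrt_mult_quadratic_bounds:
  fixes V :: "'i \<Rightarrow> real^'n^'n"
  assumes "\<And>i. i \<in> I \<Longrightarrow> transpose (V i) = V i" "\<And>i. i \<in> I \<Longrightarrow> positive_definite (V i)"
    and P: "(\<Sum>i\<in>I. a i \<bullet> (V i *v a i)) \<le> P"
    and Q: "(\<Sum>i\<in>I. b i \<bullet> (matrix_inv (V i) *v b i)) \<le> Q"
  shows "(\<Sum>i\<in>I. a i \<bullet> b i) \<le> sqrt (P * Q)"
proof -
  have "a i \<bullet> b i \<le> sqrt (a i \<bullet> (V i *v a i)) * sqrt (b i \<bullet> (matrix_inv (V i) *v b i))" if "i \<in> I" for i
  proof -
    have "sqrt ((a i \<bullet> b i)\<^sup>2) \<le> sqrt ((a i \<bullet> (V i *v a i)) * (b i \<bullet> (matrix_inv (V i) *v b i)))"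
      using inner_square_le_quadratic_mult_inverse[OF assms(1,2)[OF that]] by (rule real_sqrt_le_mono)
    then show ?thesis by (simp add: real_sqrt_mult)
  qed
  then have "(\<Sum>i\<in>I. a i \<bullet> b i)
      \<le> (\<Sum>i\<in>I. sqrt (a i \<bullet> (V i *v a i)) * sqrt (b i \<bullet> (matrix_inv (V i) *v b i)))"
    by (rule sum_mono)
  also have "\<dots> \<le> sqrt (\<Sum>i\<in>I. a i \<bullet> (V i *v a i)) * sqrt (\<Sum>i\<in>I. b i \<bullet> (matrix_inv (V i) *v b i))"
    using assms(2) by (intro sum_sqrt_mult_le)
      (simp_all add: positive_definite_quadratic_nonneg positive_definite_inverse_quadratic_nonneg)
  also have "\<dots> \<le> sqrt P * sqrt Q"
    using P Q assms(2) by (intro mult_mono real_sqrt_le_mono)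
      (simp_all add: sum_nonneg positive_definite_quadratic_nonneg positive_definite_inverse_quadratic_nonneg
        order_trans[OF sum_nonneg P])
  finally show ?thesis by (simp add: real_sqrt_mult)
qed

section \<open>The elliptical potential lemma\<close>

definition regularized_gram :: "real \<Rightarrow> (nat \<Rightarrow> real^'n) \<Rightarrow> nat \<Rightarrow> real^'n^'n" where
  "regularized_gram c u t = mat c + (\<Sum>s<t. outer_prod (u s))"

lemma regularized_gram_Suc:
  "regularized_gram c u (Suc t) = regularized_gram c u t + outer_prod (u t)"
  by (simp add: regularized_gram_def add.assoc)

lemma regularized_gram_quadratic:
  "x \<bullet> (regularized_gram c u t *v x) = c * (x \<bullet> x) + (\<Sum>s<t. (u s \<bullet> x)\<^sup>2)"
proof (induction t)
  case 0
  have "mat c *v x = c *\<^sub>R x"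
    by (simp add: vec_eq_iff matrix_vector_mult_def mat_def if_distrib[where f="\<lambda>x. x * _"] cong: if_cong)
  then show ?case by (simp add: regularized_gram_def)
next
  case (Suc t)
  then show ?case
    by (simp add: regularized_gram_Suc matrix_vector_mult_add_rdistrib inner_add_right
        outer_prod_mult_vector power2_eq_square inner_commute)
qed

lemma regularized_gram_symmetric: "transpose (regularized_gram c u t) = regularized_gram c u t"
  by (simp add: regularized_gram_def transpose_def vec_eq_iff mat_def outer_prod_def mult.commute)

lemma regularized_gram_positive_definite:
  "c > 0 \<Longrightarrow> positive_definite (regularized_gram c u t)"
  unfolding positive_definite_def regularized_gram_quadratic
  by (intro allI impI add_pos_nonneg) (simp_all add: sum_nonneg)

lemma trace_regularized_gram:
  "trace (regularized_gram c u t :: real^'n^'n) = real CARD('n) * c + (\<Sum>s<t. u s \<bullet> u s)"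
  by (simp add: regularized_gram_def trace_def mat_def sum_component outer_prod_def sum.distrib
      inner_vec_def sum.swap[of _ UNIV])

lemma det_regularized_gram_0: "det (regularized_gram c u 0 :: real^'n^'n) = c ^ CARD('n)"
  using det_diagonal[of "regularized_gram c u 0 :: real^'n^'n"]
  by (simp add: regularized_gram_def mat_def)

lemma rank_one_update:
  fixes V :: "real^'n^'n"
  assumes sym: "transpose V = V" and pd: "positive_definite V" and y: "V *v y = u"
  shows "det (V + outer_prod u) = det V * (1 + u \<bullet> y)"
    and "u \<bullet> (matrix_inv (V + outer_prod u) *v u) = (u \<bullet> y) / (1 + u \<bullet> y)"
    and "0 \<le> u \<bullet> y"
proof -
  show "det (V + outer_prod u) = det V * (1 + u \<bullet> y)"
    using det_add_outer_prod[of V y u] sym y by simp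
  show "0 \<le> u \<bullet> y"
    using positive_definite_quadratic_nonneg[OF pd, of y] y by (simp add: inner_commute)
  have "positive_definite (V + outer_prod u)"
    using pd unfolding positive_definite_def
    by (simp add: matrix_vector_mult_add_rdistrib inner_add_right outer_prod_mult_vector
        add_pos_nonneg inner_commute)
  moreover have "(V + outer_prod u) *v y = (1 + u \<bullet> y) *\<^sub>R u"
    by (simp add: matrix_vector_mult_add_rdistrib outer_prod_mult_vector y inner_commute algebra_simps)
  then have "(V + outer_prod u) *v ((1 / (1 + u \<bullet> y)) *\<^sub>R y) = u"
    using \<open>0 \<le> u \<bullet> y\<close> by (simp add: matrix_vector_mult_scaleR)
  ultimately show "u \<bullet> (matrix_inv (V + outer_prod u) *v u) = (u \<bullet> y) / (1 + u \<bullet> y)"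
    by (simp add: matrix_inv_mult_vector_eq positive_definite_invertible)
qed

lemma ln_det_le_card_mult_ln_mean_trace:
  fixes A :: "real^'n^'n"
  assumes "transpose A = A" "positive_definite A" "0 < det A"
  shows "ln (det A) \<le> real CARD('n) * ln (trace A / CARD('n))"
proof -
  have diag: "0 < A$i$i" for i using positive_definite_diagonal_pos[OF assms(2)] .
  have "ln (det A) \<le> ln (\<Prod>i\<in>UNIV. A$i$i)"
    using hadamard_inequality[OF assms(1,2)] assms(3) by simp
  also have "\<dots> = (\<Sum>i\<in>UNIV. ln (A$i$i))"
    using diag by (simp add: ln_prod less_imp_neq[symmetric])
  also have "\<dots> \<le> CARD('n) * ln (trace A / CARD('n))"
    using sum_ln_le_card_mult_ln_mean[of UNIV "\<lambda>i. A$i$i"] diag by (simp add: trace_def)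
  finally show ?thesis .
qed

text \<open>With \<open>r\<^sub>t = u\<^sub>t\<^sup>T V\<^sub>t\<^sup>-\<^sup>1 u\<^sub>t\<close>, the rank-one update gives \<open>u\<^sub>t\<^sup>T V\<^sub>t\<^sub>+\<^sub>1\<^sup>-\<^sup>1 u\<^sub>t = r\<^sub>t / (1 + r\<^sub>t) \<le> ln (1 + r\<^sub>t)\<close>
  and \<open>det V\<^sub>T = c\<^sup>d \<Prod>\<^sub>t (1 + r\<^sub>t)\<close>; Hadamard's inequality bounds \<open>det V\<^sub>T\<close> through the trace.\<close>
lemma elliptical_potential:
  fixes u :: "nat \<Rightarrow> real^'n" and c :: real
  assumes c: "c > 0"
  shows "(\<Sum>t<T. u t \<bullet> (matrix_inv (regularized_gram c u (Suc t)) *v u t))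
     \<le> real CARD('n) * ln (1 + (\<Sum>t<T. u t \<bullet> u t) / (real CARD('n) * c))"
proof -
  define V where "V = regularized_gram c u"
  define r where "r t = u t \<bullet> (matrix_inv (V t) *v u t)" for t
  have step: "u t \<bullet> (matrix_inv (V (Suc t)) *v u t) = r t / (1 + r t)"
    "det (V (Suc t)) = det (V t) * (1 + r t)" "0 \<le> r t" for t
    using rank_one_update[OF regularized_gram_symmetric regularized_gram_positive_definite[OF c]
        invertible_mult_matrix_inv_vector[OF positive_definite_invertible
          [OF regularized_gram_positive_definite[OF c]]]]
    by (simp_all add: V_def r_def regularized_gram_Suc)
  have det_V: "det (V T) = c ^ CARD('n) * (\<Prod>t<T. 1 + r t)"
    by (induction T) (simp_all add: V_def det_regularized_gram_0 step(2)[unfolded V_def])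
  have "(\<Prod>t<T. 1 + r t) > 0" using step(3) by (intro prod_pos) (simp add: add_pos_nonneg)
  then have "0 < det (V T)" using det_V c by simp
  have "(\<Sum>t<T. u t \<bullet> (matrix_inv (V (Suc t)) *v u t)) \<le> (\<Sum>t<T. ln (1 + r t))"
    unfolding step(1) using step(3) divide_one_plus_le_ln_one_plus by (intro sum_mono) simp
  also have "\<dots> = ln (det (V T)) - CARD('n) * ln c"
    using \<open>(\<Prod>t<T. 1 + r t) > 0\<close> step(3) c
    by (simp add: det_V ln_mult ln_realpow ln_prod add_nonneg_eq_0_iff)
  also have "\<dots> \<le> CARD('n) * ln (trace (V T) / CARD('n)) - CARD('n) * ln c"
    using ln_det_le_card_mult_ln_mean_trace[OF _ _ \<open>0 < det (V T)\<close>] c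
    by (simp add: V_def regularized_gram_symmetric regularized_gram_positive_definite)
  also have "\<dots> = CARD('n) * ln (1 + (\<Sum>t<T. u t \<bullet> u t) / (CARD('n) * c))"
  proof -
    have "0 \<le> (\<Sum>t<T. u t \<bullet> u t)" by (simp add: sum_nonneg)
    then have "trace (V T) / CARD('n) = c * (1 + (\<Sum>t<T. u t \<bullet> u t) / (CARD('n) * c))"
      using c by (simp add: V_def trace_regularized_gram field_simps)
    moreover have "0 < 1 + (\<Sum>t<T. u t \<bullet> u t) / (CARD('n) * c)"
      using \<open>0 \<le> (\<Sum>t<T. u t \<bullet> u t)\<close> c by (simp add: add_pos_nonneg)
    ultimately have "ln (trace (V T) / CARD('n)) = ln c + ln (1 + (\<Sum>t<T. u t \<bullet> u t) / (CARD('n) * c))"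
      using c by (simp add: ln_mult_pos)
    then show ?thesis by (simp add: algebra_simps)
  qed
  finally show ?thesis by (simp add: V_def)
qed

lemma elliptical_potential_family:
  fixes u :: "'i \<Rightarrow> nat \<Rightarrow> real^'n" and c :: real
  assumes c: "c > 0" and I: "finite I" "I \<noteq> {}"
  shows "(\<Sum>i\<in>I. \<Sum>t<T. u i t \<bullet> (matrix_inv (regularized_gram c (u i) (Suc t)) *v u i t))
     \<le> real CARD('n) * card I * ln (1 + (\<Sum>i\<in>I. \<Sum>t<T. u i t \<bullet> u i t) / (real CARD('n) * card I * c))"
proof -
  define d where "d = real CARD('n)"
  define S where "S i = (\<Sum>t<T. u i t \<bullet> u i t)" for i
  have "d > 0" "card I > 0" using I by (simp_all add: d_def card_gt_0_iff)
  have "0 \<le> S i" for i by (simp add: S_def sum_nonneg)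
  have "(\<Sum>i\<in>I. \<Sum>t<T. u i t \<bullet> (matrix_inv (regularized_gram c (u i) (Suc t)) *v u i t))
      \<le> d * (\<Sum>i\<in>I. ln (1 + S i / (d * c)))"
    unfolding sum_distrib_left d_def S_def by (intro sum_mono elliptical_potential[OF c])
  also have "\<dots> \<le> d * (card I * ln ((\<Sum>i\<in>I. 1 + S i / (d * c)) / card I))"
    using sum_ln_le_card_mult_ln_mean[OF I, of "\<lambda>i. 1 + S i / (d * c)"] \<open>d > 0\<close> c \<open>\<And>i. 0 \<le> S i\<close>
    by (intro mult_left_mono) (simp_all add: add_pos_nonneg)
  also have "(\<Sum>i\<in>I. 1 + S i / (d * c)) / card I = 1 + (\<Sum>i\<in>I. S i) / (d * card I * c)"
    using \<open>card I > 0\<close> by (simp add: sum.distrib sum_divide_distrib[symmetric] field_simps)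
  finally show ?thesis by (simp add: d_def S_def mult.assoc)
qed

lemma l1norm_nonneg: "0 \<le> l1norm x"
  by (simp add: l1norm_def sum_nonneg)

lemma l1norm_sum_le: "l1norm (\<Sum>n\<in>S. f n) \<le> (\<Sum>n\<in>S. l1norm (f n))"
proof -
  have "l1norm (\<Sum>n\<in>S. f n) \<le> (\<Sum>i\<in>UNIV. \<Sum>n\<in>S. \<bar>f n $ i\<bar>)"
    unfolding l1norm_def sum_component by (intro sum_mono sum_abs)
  also have "\<dots> = (\<Sum>n\<in>S. l1norm (f n))"
    by (simp add: l1norm_def sum.swap[of _ UNIV])
  finally show ?thesis .
qed

lemma l1norm_scaleR: "l1norm (c *\<^sub>R x) = \<bar>c\<bar> * l1norm x"
  by (simp add: l1norm_def abs_mult sum_distrib_left)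

lemma inner_self_le_l1norm_square: "x \<bullet> x \<le> (l1norm x)\<^sup>2"
proof -
  have "x \<bullet> x = (\<Sum>i\<in>UNIV. \<bar>x$i\<bar>\<^sup>2)" by (simp add: inner_vec_def power2_eq_square)
  also have "\<dots> \<le> (l1norm x)\<^sup>2" unfolding l1norm_def by (rule sum_squares_le_square_sum) simp
  finally show ?thesis .
qed

lemma sum_inner_self_le_square_sum_l1norm:
  "(\<Sum>i\<in>I. x i \<bullet> x i) \<le> (\<Sum>i\<in>I. l1norm (x i))\<^sup>2"
proof -
  have "(\<Sum>i\<in>I. x i \<bullet> x i) \<le> (\<Sum>i\<in>I. (l1norm (x i))\<^sup>2)"
    by (intro sum_mono inner_self_le_l1norm_square)
  also have "\<dots> \<le> (\<Sum>i\<in>I. l1norm (x i))\<^sup>2"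
    by (intro sum_squares_le_square_sum l1norm_nonneg)
  finally show ?thesis .
qed

definition sign_aligned_sum :: "'a::real_inner \<Rightarrow> ('j \<Rightarrow> 'a) \<Rightarrow> 'j set \<Rightarrow> 'a" where
  "sign_aligned_sum w x S = (\<Sum>n\<in>S. sgn (w \<bullet> x n) *\<^sub>R x n)"

lemma inner_sign_aligned_sum: "w \<bullet> sign_aligned_sum w x S = (\<Sum>n\<in>S. \<bar>w \<bullet> x n\<bar>)"
  by (simp add: sign_aligned_sum_def inner_sum_right abs_sgn mult.commute)

lemma abs_inner_sign_aligned_sum_le: "\<bar>sign_aligned_sum w x S \<bullet> v\<bar> \<le> (\<Sum>n\<in>S. \<bar>v \<bullet> x n\<bar>)"
proof -
  have "\<bar>sign_aligned_sum w x S \<bullet> v\<bar> \<le> (\<Sum>n\<in>S. \<bar>sgn (w \<bullet> x n) * (v \<bullet> x n)\<bar>)"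
    unfolding sign_aligned_sum_def inner_sum_left by (rule order_trans[OF sum_abs]) (simp add: inner_commute)
  also have "\<dots> \<le> (\<Sum>n\<in>S. \<bar>v \<bullet> x n\<bar>)"
    by (intro sum_mono) (simp add: abs_mult abs_sgn_eq mult_le_cancel_right1)
  finally show ?thesis .
qed

lemma l1norm_sign_aligned_sum_le: "l1norm (sign_aligned_sum w x S) \<le> (\<Sum>n\<in>S. l1norm (x n))"
  unfolding sign_aligned_sum_def
  by (rule order_trans[OF l1norm_sum_le]) (simp add: sum_mono l1norm_scaleR abs_sgn_eq l1norm_nonneg)

lemma sum_inner_self_sign_aligned_sum_le:
  fixes x :: "'l \<Rightarrow> 'j \<Rightarrow> real^'n"
  assumes "(\<Sum>l\<in>A. \<Sum>n\<in>S. l1norm (x l n)) \<le> G"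
  shows "(\<Sum>l\<in>A. sign_aligned_sum (w l) (x l) S \<bullet> sign_aligned_sum (w l) (x l) S) \<le> G\<^sup>2"
proof -
  have "(\<Sum>l\<in>A. sign_aligned_sum (w l) (x l) S \<bullet> sign_aligned_sum (w l) (x l) S)
      \<le> (\<Sum>l\<in>A. l1norm (sign_aligned_sum (w l) (x l) S))\<^sup>2"
    by (rule sum_inner_self_le_square_sum_l1norm)
  also have "\<dots> \<le> G\<^sup>2"
  proof (rule power_mono)
    show "(\<Sum>l\<in>A. l1norm (sign_aligned_sum (w l) (x l) S)) \<le> G"
      using sum_mono[OF l1norm_sign_aligned_sum_le] assms by (rule order_trans)
  qed (simp add: sum_nonneg l1norm_nonneg)
  finally show ?thesis .
qed

section \<open>Rounds enumerated blockwise\<close>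

text \<open>Lists \<open>b k m\<close> (blocks \<open>k \<ge> 1\<close> of length \<open>M\<close>, positions \<open>1 \<le> m \<le> M\<close>) as one sequence
  starting at round 0: round \<open>(k - 1) M + (m - 1)\<close> carries \<open>b k m\<close>.\<close>
definition block_seq :: "nat \<Rightarrow> (nat \<Rightarrow> nat \<Rightarrow> 'a) \<Rightarrow> nat \<Rightarrow> 'a" where
  "block_seq M b t = b (t div M + 1) (t mod M + 1)"

lemma block_seq_block_index:
  assumes "1 \<le> k" "1 \<le> m" "m \<le> M"
  shows "block_seq M b ((k - 1) * M + (m - 1)) = b k m"
proof -
  obtain k' m' where "k = Suc k'" "m = Suc m'" "m' < M" using assms by (cases k; cases m) auto
  then show ?thesis by (simp add: block_seq_def)
qed

lemma sum_blocks_eq_sum_lessThan: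
  fixes K M :: nat
  shows "(\<Sum>k=1..K. \<Sum>m=1..M. h ((k - 1) * M + (m - 1))) = (\<Sum>t<K * M. h t)"
proof (cases "M = 0")
  case False
  have "(\<Sum>k=1..K. \<Sum>m=1..M. h ((k - 1) * M + (m - 1)))
      = (\<Sum>(k, m)\<in>{1..K} \<times> {1..M}. h ((k - 1) * M + (m - 1)))"
    by (rule sum.cartesian_product)
  also have "\<dots> = (\<Sum>t<K * M. h t)"
  proof (rule sum.reindex_bij_witness[where i="block_seq M Pair" and j="\<lambda>(k, m). (k - 1) * M + (m - 1)"])
    fix t assume "t \<in> {..<K * M}"
    then show "block_seq M Pair t \<in> {1..K} \<times> {1..M}"
      using False by (auto simp: block_seq_def div_less_iff_less_mult Suc_le_eq)
  next
    fix km assume "km \<in> {1..K} \<times> {1..M}"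
    then obtain k m where km: "km = (k, m)" "1 \<le> k" "k \<le> K" "1 \<le> m" "m \<le> M" by auto
    then show "block_seq M Pair ((\<lambda>(k, m). (k - 1) * M + (m - 1)) km) = km"
      using block_seq_block_index[of k m M Pair] by simp
    have "(k - 1) * M + (m - 1) < (k - 1) * M + M" using km by simp
    also have "\<dots> = k * M" using km by (cases k) simp_all
    also have "\<dots> \<le> K * M" using km by simp
    finally show "(\<lambda>(k, m). (k - 1) * M + (m - 1)) km \<in> {..<K * M}" using km by simp
  qed (use False in \<open>auto simp: block_seq_def\<close>)
  finally show ?thesis .
qed simp

lemma sum_lessThan_block_seq:
  fixes K M :: nat
  shows "(\<Sum>t<K * M. g t (block_seq M b t)) = (\<Sum>k=1..K. \<Sum>m=1..M. g ((k - 1) * M + (m - 1)) (b k m))"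
proof -
  have "block_seq M b ((k - 1) * M + (m - 1)) = b k m" if "k \<in> {1..K}" "m \<in> {1..M}" for k m
    using that by (intro block_seq_block_index) auto
  then show ?thesis unfolding sum_blocks_eq_sum_lessThan[symmetric] by (auto intro!: sum.cong)
qed

lemma sum_triple_product:
  "(\<Sum>(l, m, n)\<in>A \<times> B \<times> C. f l m n) = (\<Sum>l\<in>A. \<Sum>m\<in>B. \<Sum>n\<in>C. f l m n)"
  by (simp add: sum.cartesian_product)

lemma regularized_gram_block_quadratic_le:
  fixes b :: "nat \<Rightarrow> nat \<Rightarrow> real^'n"
  assumes "1 \<le> k" "1 \<le> m" "m \<le> M"
  shows "a \<bullet> (regularized_gram c (block_seq M b) (Suc ((k - 1) * M + (m - 1))) *v a)
    \<le> c * (a \<bullet> a) + (\<Sum>j=1..k. \<Sum>m'=1..M. (b j m' \<bullet> a)\<^sup>2)"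
proof -
  have "Suc ((k - 1) * M + (m - 1)) \<le> k * M"
    using assms by (cases k; cases m) simp_all
  then have "(\<Sum>s<Suc ((k - 1) * M + (m - 1)). (block_seq M b s \<bullet> a)\<^sup>2)
      \<le> (\<Sum>s<k * M. (block_seq M b s \<bullet> a)\<^sup>2)"
    by (intro sum_mono2) auto
  also have "\<dots> = (\<Sum>j=1..k. \<Sum>m'=1..M. (b j m' \<bullet> a)\<^sup>2)"
    by (rule sum_lessThan_block_seq)
  finally show ?thesis by (simp add: regularized_gram_quadratic)
qed

lemma block_gram_quadratic_sum_le:
  fixes w z x :: "nat \<Rightarrow> nat \<Rightarrow> nat \<Rightarrow> real^'n"
  assumes z: "\<And>l j m v. \<bar>z l j m \<bullet> v\<bar> \<le> (\<Sum>n=1..N. \<bar>v \<bullet> x j l n\<bar>)"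
    and k: "1 \<le> k" and c: "0 \<le> c"
    and hbeta: "(\<Sum>j=1..k. (\<Sum>(l,m,n)\<in>{1..L}\<times>{1..M}\<times>{1..N}. \<bar>w k l m \<bullet> x j l n\<bar>)\<^sup>2) \<le> \<beta>"
    and hw: "(\<Sum>l=1..L. \<Sum>m=1..M. l1norm (w k l m)) \<le> G"
  shows "(\<Sum>l=1..L. \<Sum>m=1..M.
      w k l m \<bullet> (regularized_gram c (block_seq M (z l)) (Suc ((k - 1) * M + (m - 1))) *v w k l m))
    \<le> c * G\<^sup>2 + M * \<beta>"
proof -
  define e where "e j l m = (\<Sum>n=1..N. \<bar>w k l m \<bullet> x j l n\<bar>)" for j l m
  have "\<bar>z l j m' \<bullet> w k l m\<bar>\<^sup>2 \<le> (e j l m)\<^sup>2" for l j m m'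
    using z[of l j m' "w k l m"] unfolding e_def by (rule power_mono) simp
  then have square_bound: "(z l j m' \<bullet> w k l m)\<^sup>2 \<le> (e j l m)\<^sup>2" for l j m m' by simp
  have round_bound: "w k l m \<bullet> (regularized_gram c (block_seq M (z l)) (Suc ((k - 1) * M + (m - 1))) *v w k l m)
      \<le> c * (w k l m \<bullet> w k l m) + M * (\<Sum>j=1..k. (e j l m)\<^sup>2)" if "m \<in> {1..M}" for l m
  proof -
    have "(\<Sum>j=1..k. \<Sum>m'=1..M. (z l j m' \<bullet> w k l m)\<^sup>2) \<le> (\<Sum>j=1..k. \<Sum>m'=1..M. (e j l m)\<^sup>2)"
      by (intro sum_mono square_bound)
    then show ?thesis
      using regularized_gram_block_quadratic_le[of k m M "w k l m" c "z l"] k that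
      by (simp add: sum_distrib_left)
  qed
  have "(\<Sum>l=1..L. \<Sum>m=1..M. w k l m \<bullet> w k l m) \<le> (\<Sum>l=1..L. \<Sum>m=1..M. l1norm (w k l m))\<^sup>2"
    using sum_inner_self_le_square_sum_l1norm[of "\<lambda>(l, m). w k l m" "{1..L} \<times> {1..M}"]
    by (simp add: sum.cartesian_product split_def)
  also have "\<dots> \<le> G\<^sup>2"
    using hw by (intro power_mono) (simp_all add: sum_nonneg l1norm_nonneg)
  finally have w_bound: "(\<Sum>l=1..L. \<Sum>m=1..M. w k l m \<bullet> w k l m) \<le> G\<^sup>2" .
  have e_bound: "(\<Sum>l=1..L. \<Sum>m=1..M. \<Sum>j=1..k. (e j l m)\<^sup>2) \<le> \<beta>"
  proof -
    have "(\<Sum>l=1..L. \<Sum>m=1..M. \<Sum>j=1..k. (e j l m)\<^sup>2) = (\<Sum>j=1..k. \<Sum>l=1..L. \<Sum>m=1..M. (e j l m)\<^sup>2)"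
      by (rule trans[OF sum.cong[OF refl sum.swap] sum.swap])
    also have "\<dots> = (\<Sum>j=1..k. \<Sum>(l, m)\<in>{1..L}\<times>{1..M}. (e j l m)\<^sup>2)"
      by (simp add: sum.cartesian_product)
    also have "\<dots> \<le> (\<Sum>j=1..k. (\<Sum>(l, m)\<in>{1..L}\<times>{1..M}. e j l m)\<^sup>2)"
      by (intro sum_mono) (simp add: sum_squares_le_square_sum e_def sum_nonneg split_def)
    also have "\<dots> \<le> \<beta>"
      using hbeta by (simp add: e_def sum_triple_product sum.cartesian_product[symmetric])
    finally show ?thesis .
  qed
  have "(\<Sum>l=1..L. \<Sum>m=1..M.
      w k l m \<bullet> (regularized_gram c (block_seq M (z l)) (Suc ((k - 1) * M + (m - 1))) *v w k l m))
    \<le> (\<Sum>l=1..L. \<Sum>m=1..M. c * (w k l m \<bullet> w k l m) + M * (\<Sum>j=1..k. (e j l m)\<^sup>2))"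
    using round_bound by (intro sum_mono) auto
  also have "\<dots> = c * (\<Sum>l=1..L. \<Sum>m=1..M. w k l m \<bullet> w k l m) + M * (\<Sum>l=1..L. \<Sum>m=1..M. \<Sum>j=1..k. (e j l m)\<^sup>2)"
    by (simp add: sum.distrib sum_distrib_left)
  also have "\<dots> \<le> c * G\<^sup>2 + M * \<beta>"
    using w_bound e_bound c by (intro add_mono mult_left_mono) simp_all
  finally show ?thesis .
qed

lemma block_gram_quadratic_total_le:
  fixes w z x :: "nat \<Rightarrow> nat \<Rightarrow> nat \<Rightarrow> real^'n"
  assumes z: "\<And>l j m v. \<bar>z l j m \<bullet> v\<bar> \<le> (\<Sum>n=1..N. \<bar>v \<bullet> x j l n\<bar>)"
    and c: "0 \<le> c"
    and hbeta: "\<forall>k\<in>{1..K}. (\<Sum>j=1..k. (\<Sum>(l,m,n)\<in>{1..L}\<times>{1..M}\<times>{1..N}. \<bar>w k l m \<bullet> x j l n\<bar>)\<^sup>2) \<le> \<beta>"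
    and hw: "\<forall>k\<in>{1..K}. (\<Sum>l=1..L. \<Sum>m=1..M. l1norm (w k l m)) \<le> G"
  shows "(\<Sum>(k, l, m)\<in>{1..K}\<times>{1..L}\<times>{1..M}.
      w k l m \<bullet> (regularized_gram c (block_seq M (z l)) (Suc ((k - 1) * M + (m - 1))) *v w k l m))
    \<le> K * (c * G\<^sup>2 + M * \<beta>)"
proof -
  have "(\<Sum>k=1..K. \<Sum>l=1..L. \<Sum>m=1..M.
      w k l m \<bullet> (regularized_gram c (block_seq M (z l)) (Suc ((k - 1) * M + (m - 1))) *v w k l m))
    \<le> (\<Sum>k=1..K. c * G\<^sup>2 + M * \<beta>)"
    using block_gram_quadratic_sum_le[where w=w and z=z and x=x and N=N and c=c, OF z _ c] hbeta hw
    by (intro sum_mono) simp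
  then show ?thesis by (simp add: sum_triple_product)
qed

lemma block_elliptical_potential:
  fixes z :: "nat \<Rightarrow> nat \<Rightarrow> nat \<Rightarrow> real^'n" and c :: real and K L M :: nat
  assumes "c > 0" "1 \<le> L"
  shows "(\<Sum>l=1..L. \<Sum>k=1..K. \<Sum>m=1..M.
      z l k m \<bullet> (matrix_inv (regularized_gram c (block_seq M (z l)) (Suc ((k - 1) * M + (m - 1)))) *v z l k m))
    \<le> real CARD('n) * L * ln (1 + (\<Sum>l=1..L. \<Sum>k=1..K. \<Sum>m=1..M. z l k m \<bullet> z l k m) / (real CARD('n) * L * c))"
proof -
  have potential_eq: "(\<Sum>t<K * M. block_seq M (z l) t \<bullet> (matrix_inv (regularized_gram c (block_seq M (z l)) (Suc t))
      *v block_seq M (z l) t))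
    = (\<Sum>k=1..K. \<Sum>m=1..M. z l k m \<bullet> (matrix_inv (regularized_gram c (block_seq M (z l))
      (Suc ((k - 1) * M + (m - 1)))) *v z l k m))" for l
    by (rule sum_lessThan_block_seq[where g="\<lambda>t v. v \<bullet> (matrix_inv (regularized_gram c (block_seq M (z l)) (Suc t)) *v v)"])
  have squared_norm_eq: "(\<Sum>t<K * M. block_seq M (z l) t \<bullet> block_seq M (z l) t)
    = (\<Sum>k=1..K. \<Sum>m=1..M. z l k m \<bullet> z l k m)" for l
    by (rule sum_lessThan_block_seq[where g="\<lambda>t v. v \<bullet> v"])
  show ?thesis
    using elliptical_potential_family[OF assms(1), of "{1..L}" "\<lambda>l. block_seq M (z l)" "K * M"] assms(2)
    unfolding potential_eq squared_norm_eq by simp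
qed

lemma block_potential_total_le:
  fixes z :: "nat \<Rightarrow> nat \<Rightarrow> nat \<Rightarrow> real^'n" and c G :: real and K L M :: nat
  assumes c: "c > 0" and L: "1 \<le> L"
    and norms: "\<And>k m. k \<in> {1..K} \<Longrightarrow> (\<Sum>l=1..L. z l k m \<bullet> z l k m) \<le> G"
  shows "(\<Sum>(k, l, m)\<in>{1..K}\<times>{1..L}\<times>{1..M}.
      z l k m \<bullet> (matrix_inv (regularized_gram c (block_seq M (z l)) (Suc ((k - 1) * M + (m - 1)))) *v z l k m))
    \<le> real CARD('n) * L * ln (1 + K * M * G / (real CARD('n) * L * c))"
proof -
  have "(\<Sum>l=1..L. \<Sum>k=1..K. \<Sum>m=1..M. z l k m \<bullet> z l k m) = (\<Sum>k=1..K. \<Sum>m=1..M. \<Sum>l=1..L. z l k m \<bullet> z l k m)"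
    by (rule trans[OF sum.swap sum.cong[OF refl sum.swap]])
  also have "\<dots> \<le> (\<Sum>k=1..K. \<Sum>m=1..M. G)"
    using norms by (intro sum_mono) simp
  finally have "(\<Sum>l=1..L. \<Sum>k=1..K. \<Sum>m=1..M. z l k m \<bullet> z l k m) \<le> K * M * G" by simp
  moreover have "0 \<le> (\<Sum>l=1..L. \<Sum>k=1..K. \<Sum>m=1..M. z l k m \<bullet> z l k m)" by (simp add: sum_nonneg)
  ultimately have "ln (1 + (\<Sum>l=1..L. \<Sum>k=1..K. \<Sum>m=1..M. z l k m \<bullet> z l k m) / (real CARD('n) * L * c))
      \<le> ln (1 + K * M * G / (real CARD('n) * L * c))"
    using c L by (simp add: add_pos_nonneg divide_right_mono)
  then have "(\<Sum>l=1..L. \<Sum>k=1..K. \<Sum>m=1..M.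
      z l k m \<bullet> (matrix_inv (regularized_gram c (block_seq M (z l)) (Suc ((k - 1) * M + (m - 1)))) *v z l k m))
    \<le> real CARD('n) * L * ln (1 + K * M * G / (real CARD('n) * L * c))"
    by (rule order_trans[OF block_elliptical_potential[OF c L] mult_left_mono]) simp
  then show ?thesis unfolding sum_triple_product by (subst sum.swap)
qed

theorem proposition5:
  fixes d K L M N :: nat
    and w x :: "nat \<Rightarrow> nat \<Rightarrow> nat \<Rightarrow> real ^ 'd"
    and \<beta> G\<^sub>w G\<^sub>x lam :: real
  assumes dim: "CARD('d) = d"
    and hbeta: "\<forall>k\<in>{1..K}. (\<Sum>j=1..k. (\<Sum>(l,m,n)\<in>{1..L}\<times>{1..M}\<times>{1..N}.
                   \<bar>w k l m \<bullet> x j l n\<bar>)\<^sup>2) \<le> \<beta>"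
    and hw: "\<forall>k\<in>{1..K}. (\<Sum>l=1..L. \<Sum>m=1..M. l1norm (w k l m)) \<le> G\<^sub>w"
    and hx: "\<forall>k\<in>{1..K}. (\<Sum>l=1..L. \<Sum>n=1..N. l1norm (x k l n)) \<le> G\<^sub>x"
    and Gw: "G\<^sub>w > 0" and Gx: "G\<^sub>x > 0"
    and hlam: "lam > 0"
  shows "(\<Sum>k=1..K. \<Sum>(l,m,n)\<in>{1..L}\<times>{1..M}\<times>{1..N}. \<bar>w k l m \<bullet> x k l n\<bar>)
         \<le> sqrt ((lam + \<beta>) * real d * real L * real M * real K *
                  ln (1 + real M * G\<^sub>w\<^sup>2 * G\<^sub>x\<^sup>2 * real K / (real d * real L * lam)))"
proof (cases "K = 0 \<or> L = 0 \<or> M = 0")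
  case True
  then show ?thesis by auto
next
  case False
  define c where "c = lam / G\<^sub>w\<^sup>2"
  define z where "z l k m = sign_aligned_sum (w k l m) (x k l) {1..N}" for l k m
  define V where "V k l m = regularized_gram c (block_seq M (z l)) (Suc ((k - 1) * M + (m - 1)))" for k l m
  define X where "X = 1 + real M * G\<^sub>w\<^sup>2 * G\<^sub>x\<^sup>2 * real K / (real d * real L * lam)"
  have "c > 0" "1 \<le> L" "1 \<le> M" "1 \<le> X"
    using False Gw hlam by (auto simp: c_def X_def)
  have "\<bar>z l j m \<bullet> v\<bar> \<le> (\<Sum>n=1..N. \<bar>v \<bullet> x j l n\<bar>)" for l j m v
    unfolding z_def by (rule abs_inner_sign_aligned_sum_le)
  from block_gram_quadratic_total_le[where c=c, OF this _ hbeta hw]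
  have gram: "(\<Sum>(k, l, m)\<in>{1..K}\<times>{1..L}\<times>{1..M}. w k l m \<bullet> (V k l m *v w k l m)) \<le> real K * (lam + real M * \<beta>)"
    using \<open>c > 0\<close> Gw by (simp add: V_def c_def)
  have "(\<Sum>l=1..L. z l k m \<bullet> z l k m) \<le> G\<^sub>x\<^sup>2" if "k \<in> {1..K}" for k m
    using sum_inner_self_sign_aligned_sum_le[where x="x k" and w="\<lambda>l. w k l m"] hx that by (simp add: z_def)
  moreover have "real K * real M * G\<^sub>x\<^sup>2 / (real d * real L * c) = X - 1"
    using Gw by (simp add: X_def c_def)
  ultimately have potential: "(\<Sum>(k, l, m)\<in>{1..K}\<times>{1..L}\<times>{1..M}. z l k m \<bullet> (matrix_inv (V k l m) *v z l k m))
      \<le> real d * real L * ln X"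
    using block_potential_total_le[OF \<open>c > 0\<close> \<open>1 \<le> L\<close>, of K z "G\<^sub>x\<^sup>2" M] dim by (simp add: V_def)
  have "(\<Sum>k=1..K. \<Sum>(l,m,n)\<in>{1..L}\<times>{1..M}\<times>{1..N}. \<bar>w k l m \<bullet> x k l n\<bar>)
      = (\<Sum>(k, l, m)\<in>{1..K}\<times>{1..L}\<times>{1..M}. w k l m \<bullet> z l k m)"
    by (simp add: z_def sum_triple_product inner_sign_aligned_sum)
  also have "\<dots> \<le> sqrt (real K * (lam + real M * \<beta>) * (real d * real L * ln X))"
    using sum_inner_le_sqrt_mult_quadratic_bounds[of "{1..K}\<times>{1..L}\<times>{1..M}" "\<lambda>(k, l, m). V k l m"
        "\<lambda>(k, l, m). w k l m" _ "\<lambda>(k, l, m). z l k m"] gram potential \<open>c > 0\<close>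
    by (simp add: split_def V_def regularized_gram_symmetric regularized_gram_positive_definite)
  also have "\<dots> \<le> sqrt ((lam + \<beta>) * real d * real L * real M * real K * ln X)"
  proof (rule real_sqrt_le_mono)
    have "lam \<le> M * lam" using \<open>1 \<le> M\<close> hlam by simp
    from mult_left_mono[OF this, of "real K"]
    have "real K * (lam + M * \<beta>) \<le> real K * M * (lam + \<beta>)" by (simp add: algebra_simps)
    from mult_right_mono[OF this, of "real d * real L * ln X"] \<open>1 \<le> X\<close>
    show "real K * (lam + real M * \<beta>) * (real d * real L * ln X) \<le> (lam + \<beta>) * real d * real L * real M * real K * ln X"
      by (simp add: mult_ac)
  qed
  finally show ?thesis by (simp only: X_def)
qed

end
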